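(* Let $(X,d)$ be a geodesic metric space and let $K_0,K_1,q$ be integers with $1\le K_0<K_1$ and $q\ge 3$. Suppose every $1/q$-bigon in $X$ is $K_0/2$-thin. Suppose there are geodesics $\gamma:[0,a]\to X$, $\gamma':[0,a']\to X$ with $\gamma(0)=\gamma'(0)$, and real numbers $R>0$, $r_0>0$ with $R+r_0\le\min(a,a')$, such that $d(\gamma(R+r),\gamma'(R+r))\in[K_0,K_1]$ for all $r\in(0,r_0)$. Then $$r_0\le \big(q(K_1-K_0)+1\big)\big(2^{qK_1+1}-1\big)qK_1+1.$$
   Context: A geodesic is a map $\gamma:[0,a]\to X$ with $d(\gamma(u),\gamma(v))=|u-v|$. For $q\ge0$, a $(1,q)$-quasigeodesic is a continuous map $\gamma:[0,L]\to X$ with $|t-t'|-q\le d(\gamma(t),\gamma(t'))\le |t-t'|+q$ for all $t,t'\in[0,L]$; its endpoints are $\gamma(0),\gamma(L)$. A $q$-bigon is a pair of $(1,q)$-quasigeodesics with the same endpoints; their images are its sides. For $K\ge0$ a $q$-bigon is $K$-fat if some point of one side is at distance $\ge K$ from (every point of) the other side, and $K$-thin if it is not $K$-fat. *)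

theory Defs
  imports "HOL-Analysis.Analysis"
begin

definition geodesic :: "(real \<Rightarrow> 'a::metric_space) \<Rightarrow> real \<Rightarrow> bool" where
  "geodesic \<gamma> a \<longleftrightarrow> a \<ge> 0 \<and>
     (\<forall>u\<in>{0..a}. \<forall>v\<in>{0..a}. dist (\<gamma> u) (\<gamma> v) = \<bar>u - v\<bar>)"

definition geodesic_space :: "'a::metric_space itself \<Rightarrow> bool" where
  "geodesic_space TYPE('a) \<longleftrightarrow>
     (\<forall>x y::'a. \<exists>\<gamma> a. geodesic \<gamma> a \<and> \<gamma> 0 = x \<and> \<gamma> a = y)"

definition quasigeodesic :: "real \<Rightarrow> (real \<Rightarrow> 'a::metric_space) \<Rightarrow> real \<Rightarrow> bool" where
  "quasigeodesic q \<gamma> L \<longleftrightarrow> L \<ge> 0 \<and> continuous_on {0..L} \<gamma> \<and>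
     (\<forall>t\<in>{0..L}. \<forall>t'\<in>{0..L}.
        \<bar>t - t'\<bar> - q \<le> dist (\<gamma> t) (\<gamma> t') \<and> dist (\<gamma> t) (\<gamma> t') \<le> \<bar>t - t'\<bar> + q)"

definition bigon :: "real \<Rightarrow> (real \<Rightarrow> 'a::metric_space) \<Rightarrow> real \<Rightarrow> (real \<Rightarrow> 'a) \<Rightarrow> real \<Rightarrow> bool" where
  "bigon q \<gamma>1 L1 \<gamma>2 L2 \<longleftrightarrow> quasigeodesic q \<gamma>1 L1 \<and> quasigeodesic q \<gamma>2 L2 \<and>
     \<gamma>1 0 = \<gamma>2 0 \<and> \<gamma>1 L1 = \<gamma>2 L2"

definition fat_bigon :: "real \<Rightarrow> (real \<Rightarrow> 'a::metric_space) \<Rightarrow> real \<Rightarrow> (real \<Rightarrow> 'a) \<Rightarrow> real \<Rightarrow> bool" where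
  "fat_bigon K \<gamma>1 L1 \<gamma>2 L2 \<longleftrightarrow>
     (\<exists>p\<in>\<gamma>1 ` {0..L1}. \<forall>x\<in>\<gamma>2 ` {0..L2}. dist p x \<ge> K) \<or>
     (\<exists>p\<in>\<gamma>2 ` {0..L2}. \<forall>x\<in>\<gamma>1 ` {0..L1}. dist p x \<ge> K)"

definition thin_bigon :: "real \<Rightarrow> (real \<Rightarrow> 'a::metric_space) \<Rightarrow> real \<Rightarrow> (real \<Rightarrow> 'a) \<Rightarrow> real \<Rightarrow> bool" where
  "thin_bigon K \<gamma>1 L1 \<gamma>2 L2 \<longleftrightarrow> \<not> fat_bigon K \<gamma>1 L1 \<gamma>2 L2"

end

(* The excess e(s,u) = d(gamma s, gamma' u) - (u - s) measures how far the broken path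
   gamma(s) -> gamma'(u) is from a geodesic; by the common origin and the bound d <= K1 on the
   strip it lies in [0, K1]. If for s <= u << T <= U neither e(s,u) nor e(T,U) exceeded e(s,U)
   by more than 1/q, then gamma(s) -> gamma'(u) -> gamma'(U) and gamma(s) -> gamma(T) -> gamma'(U)
   would form a 1/q-bigon in which gamma(T) stays K0/2 away from the other side. Hence bisecting
   a chain of N + 1 sample points spaced K1 + K0/2 apart yields nested intervals whose excess grows
   by 1/q at every halving; as it stays below K1 there are at most q K1 halvings, so
   N + 2 <= 2^(q K1 + 1), and the strip has length at most (2^(q K1 + 1) - 1)(K1 + K0/2). *)

theory Submission
  imports Defs
begin

lemma geodesic_nonneg: "geodesic \<gamma> a \<Longrightarrow> 0 \<le> a"
  by (simp add: geodesic_def)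

lemma geodesic_dist:
  "geodesic \<gamma> a \<Longrightarrow> u \<in> {0..a} \<Longrightarrow> v \<in> {0..a} \<Longrightarrow> dist (\<gamma> u) (\<gamma> v) = \<bar>u - v\<bar>"
  by (simp add: geodesic_def)

lemma geodesic_lipschitz: "geodesic \<gamma> a \<Longrightarrow> 1-lipschitz_on {0..a} \<gamma>"
  by (rule lipschitz_onI) (auto simp: geodesic_dist dist_real_def)

lemma geodesic_subpath:
  "geodesic \<gamma> a \<Longrightarrow> 0 \<le> u \<Longrightarrow> u \<le> U \<Longrightarrow> U \<le> a \<Longrightarrow> geodesic (\<lambda>t. \<gamma> (u + t)) (U - u)"
  by (auto simp: geodesic_def)

lemma geodesic_space_obtain_geodesic:
  fixes x y :: "'a::metric_space"
  assumes "geodesic_space TYPE('a)"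
  obtains g where "geodesic g (dist x y)" "g 0 = x" "g (dist x y) = y"
proof -
  obtain g a where g: "geodesic g a" "g 0 = x" "g a = y"
    using assms unfolding geodesic_space_def by blast
  moreover have "dist x y = a"
    using g geodesic_dist[OF g(1), of 0 a] geodesic_nonneg[OF g(1)] by auto
  ultimately show thesis using that by blast
qed

lemma lipschitz_quasigeodesic:
  fixes P :: "real \<Rightarrow> 'a::metric_space"
  assumes lip: "1-lipschitz_on {0..L} P" and "0 \<le> L" "0 \<le> eps"
    and short: "L \<le> dist (P 0) (P L) + eps"
  shows "quasigeodesic eps P L"
proof -
  have lip_dist: "dist (P t) (P t') \<le> \<bar>t - t'\<bar>" if "t \<in> {0..L}" "t' \<in> {0..L}" for t t'
    using lipschitz_onD[OF lip that] by (simp add: dist_real_def)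
  have lower: "t' - t - eps \<le> dist (P t) (P t')"
    if "t \<in> {0..L}" "t' \<in> {0..L}" "t \<le> t'" for t t'
  proof -
    have "dist (P 0) (P L) \<le> dist (P 0) (P t) + dist (P t) (P t') + dist (P t') (P L)"
      using dist_triangle[of "P 0" "P L" "P t'"] dist_triangle[of "P 0" "P t'" "P t"] by linarith
    moreover have "dist (P 0) (P t) \<le> t" "dist (P t') (P L) \<le> L - t'"
      using lip_dist[of 0 t] lip_dist[of t' L] that \<open>0 \<le> L\<close> by auto
    ultimately show ?thesis using short by linarith
  qed
  show ?thesis unfolding quasigeodesic_def
  proof (intro conjI ballI)
    show "continuous_on {0..L} P" using lip by (rule lipschitz_on_continuous_on)
    fix t t' assume "t \<in> {0..L}" "t' \<in> {0..L}"
    then show "\<bar>t - t'\<bar> - eps \<le> dist (P t) (P t')"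
      using lower[of t t'] lower[of t' t] by (cases "t \<le> t'") (auto simp: dist_commute)
    show "dist (P t) (P t') \<le> \<bar>t - t'\<bar> + eps"
      using lip_dist[OF \<open>t \<in> _\<close> \<open>t' \<in> _\<close>] \<open>0 \<le> eps\<close> by linarith
  qed (fact \<open>0 \<le> L\<close>)
qed

definition path_concat :: "(real \<Rightarrow> 'a) \<Rightarrow> real \<Rightarrow> (real \<Rightarrow> 'a) \<Rightarrow> real \<Rightarrow> 'a" where
  "path_concat p1 l1 p2 = (\<lambda>t. if t \<le> l1 then p1 t else p2 (t - l1))"

lemma path_concat_image:
  "path_concat p1 l1 p2 ` {0..l1 + l2} \<subseteq> p1 ` {0..l1} \<union> p2 ` {0..l2}"
  by (auto simp: path_concat_def)

lemma path_concat_start: "0 \<le> l1 \<Longrightarrow> path_concat p1 l1 p2 0 = p1 0"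
  by (simp add: path_concat_def)

lemma path_concat_end: "p1 l1 = p2 0 \<Longrightarrow> 0 \<le> l2 \<Longrightarrow> path_concat p1 l1 p2 (l1 + l2) = p2 l2"
  by (cases "l2 = 0") (simp_all add: path_concat_def)

lemma path_concat_lipschitz:
  fixes p1 p2 :: "real \<Rightarrow> 'a::metric_space"
  assumes lip1: "1-lipschitz_on {0..l1} p1" and lip2: "1-lipschitz_on {0..l2} p2"
    and join: "p1 l1 = p2 0" and "0 \<le> l1"
  shows "1-lipschitz_on {0..l1 + l2} (path_concat p1 l1 p2)"
proof (rule lipschitz_on_leI)
  fix t t' :: real assume t: "t \<in> {0..l1 + l2}" "t' \<in> {0..l1 + l2}" "t \<le> t'"
  consider "t' \<le> l1" | "l1 < t" | "t \<le> l1" "l1 < t'" by linarith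
  then show "dist (path_concat p1 l1 p2 t) (path_concat p1 l1 p2 t') \<le> 1 * dist t t'"
  proof cases
    case 1
    then show ?thesis using t lipschitz_onD[OF lip1, of t t'] by (simp add: path_concat_def)
  next
    case 2
    then show ?thesis using t lipschitz_onD[OF lip2, of "t - l1" "t' - l1"]
      by (simp add: path_concat_def dist_real_def)
  next
    case 3
    have "dist (p1 t) (p2 (t' - l1)) \<le> dist (p1 t) (p1 l1) + dist (p2 0) (p2 (t' - l1))"
      using dist_triangle[of "p1 t" "p2 (t' - l1)" "p1 l1"] join by simp
    also have "\<dots> \<le> (l1 - t) + (t' - l1)"
      using 3 t \<open>0 \<le> l1\<close> lipschitz_onD[OF lip1, of t l1] lipschitz_onD[OF lip2, of 0 "t' - l1"]
      by (intro add_mono) (auto simp: dist_real_def)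
    finally show ?thesis using 3 t by (simp add: path_concat_def dist_real_def)
  qed
qed simp

lemma path_concat_quasigeodesic:
  fixes p1 p2 :: "real \<Rightarrow> 'a::metric_space"
  assumes g1: "geodesic p1 l1" and g2: "geodesic p2 l2" and join: "p1 l1 = p2 0"
    and "0 \<le> eps" and short: "l1 + l2 \<le> dist (p1 0) (p2 l2) + eps"
  shows "quasigeodesic eps (path_concat p1 l1 p2) (l1 + l2)"
proof (rule lipschitz_quasigeodesic)
  show "1-lipschitz_on {0..l1 + l2} (path_concat p1 l1 p2)"
    using g1 g2 join by (intro path_concat_lipschitz geodesic_lipschitz geodesic_nonneg)
  show "0 \<le> l1 + l2" using g1 g2 by (simp add: geodesic_nonneg)
  show "l1 + l2 \<le> dist (path_concat p1 l1 p2 0) (path_concat p1 l1 p2 (l1 + l2)) + eps"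
    using short join geodesic_nonneg[OF g1] geodesic_nonneg[OF g2]
    by (simp add: path_concat_start path_concat_end)
qed fact

lemma dist_geodesics_common_origin:
  fixes \<gamma> \<gamma>' :: "real \<Rightarrow> 'a::metric_space"
  assumes g: "geodesic \<gamma> a" and g': "geodesic \<gamma>' a'" and origin: "\<gamma> 0 = \<gamma>' 0"
    and "0 \<le> T" "T \<le> a" "T \<le> a'" "0 \<le> t" "t \<le> a'"
  shows "dist (\<gamma> T) (\<gamma>' T) \<le> 2 * dist (\<gamma> T) (\<gamma>' t)"
proof -
  have "T = dist (\<gamma> T) (\<gamma>' 0)" "t = dist (\<gamma>' t) (\<gamma>' 0)" "dist (\<gamma>' T) (\<gamma>' t) = \<bar>T - t\<bar>"
    using geodesic_dist[OF g, of T 0] geodesic_dist[OF g', of t 0] geodesic_dist[OF g', of T t]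
      origin assms(4-) by auto
  moreover have "dist (\<gamma> T) (\<gamma>' 0) \<le> dist (\<gamma> T) (\<gamma>' t) + dist (\<gamma>' t) (\<gamma>' 0)"
    "dist (\<gamma>' t) (\<gamma>' 0) \<le> dist (\<gamma>' t) (\<gamma> T) + dist (\<gamma> T) (\<gamma>' 0)"
    "dist (\<gamma> T) (\<gamma>' T) \<le> dist (\<gamma> T) (\<gamma>' t) + dist (\<gamma>' t) (\<gamma>' T)"
    by (rule dist_triangle)+
  ultimately show ?thesis by (simp add: dist_commute abs_if split: if_splits)
qed

definition excess :: "(real \<Rightarrow> 'a::metric_space) \<Rightarrow> (real \<Rightarrow> 'a) \<Rightarrow> real \<Rightarrow> real \<Rightarrow> real" where
  "excess \<gamma> \<gamma>' s u = dist (\<gamma> s) (\<gamma>' u) - (u - s)"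

lemma excess_nonneg:
  assumes g: "geodesic \<gamma> a" and g': "geodesic \<gamma>' a'" and origin: "\<gamma> 0 = \<gamma>' 0"
    and "0 \<le> s" "s \<le> a" "0 \<le> u" "u \<le> a'"
  shows "0 \<le> excess \<gamma> \<gamma>' s u"
proof -
  have "dist (\<gamma>' 0) (\<gamma>' u) \<le> dist (\<gamma>' 0) (\<gamma> s) + dist (\<gamma> s) (\<gamma>' u)"
    by (rule dist_triangle)
  moreover have "dist (\<gamma>' 0) (\<gamma>' u) = u" "dist (\<gamma>' 0) (\<gamma> s) = s"
    using geodesic_dist[OF g', of 0 u] geodesic_dist[OF g, of 0 s] origin assms(4-) by auto
  ultimately show ?thesis by (simp add: excess_def)
qed

lemma excess_le_dist:
  assumes g': "geodesic \<gamma>' a'" and "0 \<le> s" "s \<le> u" "u \<le> a'"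
  shows "excess \<gamma> \<gamma>' s u \<le> dist (\<gamma> s) (\<gamma>' s)"
proof -
  have "dist (\<gamma> s) (\<gamma>' u) \<le> dist (\<gamma> s) (\<gamma>' s) + dist (\<gamma>' s) (\<gamma>' u)"
    by (rule dist_triangle)
  moreover have "dist (\<gamma>' s) (\<gamma>' u) = u - s"
    using geodesic_dist[OF g', of s u] assms(2-) by auto
  ultimately show ?thesis by (simp add: excess_def)
qed

lemma dist_detour_lower_bound:
  fixes \<gamma> \<gamma>' :: "real \<Rightarrow> 'a::metric_space"
  assumes g: "geodesic \<gamma> a" and g': "geodesic \<gamma>' a'" and origin: "\<gamma> 0 = \<gamma>' 0"
    and g1: "geodesic g1 (dist (\<gamma> s) (\<gamma>' u))" "g1 0 = \<gamma> s" and "0 \<le> \<delta>"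
    and pts: "0 \<le> s" "s \<le> u" "u + dist (\<gamma> s) (\<gamma>' s) + \<delta> \<le> T" "T \<le> U" "U \<le> a" "U \<le> a'"
    and wide: "2 * \<delta> \<le> dist (\<gamma> T) (\<gamma>' T)"
    and p: "p \<in> g1 ` {0..dist (\<gamma> s) (\<gamma>' u)} \<union> \<gamma>' ` {u..U}"
  shows "\<delta> \<le> dist (\<gamma> T) p"
  using p
proof
  have "u \<le> a'" using pts \<open>0 \<le> \<delta>\<close> zero_le_dist[of "\<gamma> s" "\<gamma>' s"] by linarith
  assume "p \<in> g1 ` {0..dist (\<gamma> s) (\<gamma>' u)}"
  then have "dist (\<gamma> s) p \<le> dist (\<gamma> s) (\<gamma>' u)"
    using g1 geodesic_dist[OF g1(1), of 0] by auto
  also have "\<dots> \<le> dist (\<gamma> s) (\<gamma>' s) + (u - s)"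
    using excess_le_dist[OF g', where \<gamma> = \<gamma> and s = s and u = u] pts \<open>u \<le> a'\<close>
    unfolding excess_def by linarith
  finally have "dist (\<gamma> s) p \<le> dist (\<gamma> s) (\<gamma>' s) + (u - s)" .
  moreover have "dist (\<gamma> T) (\<gamma> s) = T - s"
    using geodesic_dist[OF g, of T s] pts \<open>0 \<le> \<delta>\<close> zero_le_dist[of "\<gamma> s" "\<gamma>' s"] by auto
  moreover have "dist (\<gamma> T) (\<gamma> s) \<le> dist (\<gamma> T) p + dist (\<gamma> s) p"
    by (rule dist_triangle2)
  ultimately show ?thesis using pts by linarith
next
  assume "p \<in> \<gamma>' ` {u..U}"
  then obtain t where "p = \<gamma>' t" "u \<le> t" "t \<le> U" by auto
  then show ?thesis
    using dist_geodesics_common_origin[OF g g' origin, of T t] wide pts \<open>0 \<le> \<delta>\<close>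
      zero_le_dist[of "\<gamma> s" "\<gamma>' s"] by auto
qed

lemma thin_bigons_excess_gain:
  fixes \<gamma> \<gamma>' :: "real \<Rightarrow> 'a::metric_space"
  assumes gs: "geodesic_space TYPE('a)"
    and thin: "\<And>(\<gamma>1 :: real \<Rightarrow> 'a) L1 \<gamma>2 L2. bigon eps \<gamma>1 L1 \<gamma>2 L2 \<Longrightarrow> thin_bigon \<delta> \<gamma>1 L1 \<gamma>2 L2"
    and g: "geodesic \<gamma> a" and g': "geodesic \<gamma>' a'" and origin: "\<gamma> 0 = \<gamma>' 0"
    and "0 \<le> eps" "0 \<le> \<delta>"
    and pts: "0 \<le> s" "s \<le> u" "u + dist (\<gamma> s) (\<gamma>' s) + \<delta> \<le> T" "T \<le> U" "U \<le> a" "U \<le> a'"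
    and wide: "2 * \<delta> \<le> dist (\<gamma> T) (\<gamma>' T)"
  shows "excess \<gamma> \<gamma>' s U + eps < excess \<gamma> \<gamma>' s u \<or> excess \<gamma> \<gamma>' s U + eps < excess \<gamma> \<gamma>' T U"
proof (rule ccontr)
  have pts': "u \<le> T" "T \<le> a" "T \<le> a'" "0 \<le> u"
    using pts \<open>0 \<le> \<delta>\<close> zero_le_dist[of "\<gamma> s" "\<gamma>' s"] by linarith+
  assume "\<not> ?thesis"
  then have short1: "dist (\<gamma> s) (\<gamma>' u) + (U - u) \<le> dist (\<gamma> s) (\<gamma>' U) + eps"
    and short2: "(T - s) + dist (\<gamma> T) (\<gamma>' U) \<le> dist (\<gamma> s) (\<gamma>' U) + eps"
    by (auto simp: excess_def)
  define l1 where "l1 = dist (\<gamma> s) (\<gamma>' u)"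
  define l2 where "l2 = dist (\<gamma> T) (\<gamma>' U)"
  obtain g1 where g1: "geodesic g1 l1" "g1 0 = \<gamma> s" "g1 l1 = \<gamma>' u"
    using geodesic_space_obtain_geodesic[OF gs] unfolding l1_def by metis
  obtain g2 where g2: "geodesic g2 l2" "g2 0 = \<gamma> T" "g2 l2 = \<gamma>' U"
    using geodesic_space_obtain_geodesic[OF gs] unfolding l2_def by metis
  define A where "A = path_concat g1 l1 (\<lambda>t. \<gamma>' (u + t))"
  define B where "B = path_concat (\<lambda>t. \<gamma> (s + t)) (T - s) g2"
  have sub': "geodesic (\<lambda>t. \<gamma>' (u + t)) (U - u)" and sub: "geodesic (\<lambda>t. \<gamma> (s + t)) (T - s)"
    using pts pts' by (auto intro: geodesic_subpath[OF g'] geodesic_subpath[OF g])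
  have "quasigeodesic eps A (l1 + (U - u))" "quasigeodesic eps B ((T - s) + l2)"
    unfolding A_def B_def using g1 g2 short1 short2 \<open>0 \<le> eps\<close>
    by (auto simp: l1_def l2_def intro!: path_concat_quasigeodesic sub sub')
  moreover have "A 0 = \<gamma> s" "A (l1 + (U - u)) = \<gamma>' U" "B 0 = \<gamma> s" "B ((T - s) + l2) = \<gamma>' U"
    using g1 g2 pts pts' geodesic_nonneg[OF g1(1)] geodesic_nonneg[OF g2(1)]
    by (simp_all add: A_def B_def path_concat_start path_concat_end)
  ultimately have bigon: "bigon eps B ((T - s) + l2) A (l1 + (U - u))"
    by (simp add: bigon_def)
  have "\<gamma> T \<in> B ` {0..(T - s) + l2}"
    using pts pts' geodesic_nonneg[OF g2(1)]
    by (auto simp: B_def path_concat_def intro!: image_eqI[of _ _ "T - s"])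
  moreover have "\<delta> \<le> dist (\<gamma> T) p" if "p \<in> A ` {0..l1 + (U - u)}" for p
  proof (rule dist_detour_lower_bound[OF g g' origin g1(1)[unfolded l1_def] g1(2) \<open>0 \<le> \<delta>\<close> pts wide])
    show "p \<in> g1 ` {0..dist (\<gamma> s) (\<gamma>' u)} \<union> \<gamma>' ` {u..U}"
      using path_concat_image that unfolding A_def l1_def by (fastforce simp: image_iff)
  qed
  ultimately have "fat_bigon \<delta> B ((T - s) + l2) A (l1 + (U - u))"
    unfolding fat_bigon_def by blast
  with thin[OF bigon] show False by (simp add: thin_bigon_def)
qed

lemma excess_growth_length_bound:
  fixes e :: "nat \<Rightarrow> nat \<Rightarrow> real"
  assumes bounded: "\<And>i l. i \<le> l \<Longrightarrow> l \<le> N \<Longrightarrow> e i l \<le> K"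
    and gain: "\<And>i j k l. i \<le> j \<Longrightarrow> j < k \<Longrightarrow> k \<le> l \<Longrightarrow> l \<le> N \<Longrightarrow>
                 e i l + eps < e i j \<or> e i l + eps < e k l"
    and "i \<le> l" "l \<le> N" "K - (real n + 1) * eps < e i l"
  shows "l - i + 2 \<le> 2 ^ (n + 1)"
  using assms(3-)
proof (induction n arbitrary: i l)
  case 0
  show ?case
  proof (rule ccontr)
    assume "\<not> ?case"
    then have "e i l + eps < e i i \<or> e i l + eps < e l l"
      using gain[of i i l l] 0 by auto
    moreover have "e i i \<le> K" "e l l \<le> K" using bounded 0 by auto
    ultimately show False using 0 by auto
  qed
next
  case (Suc n)
  define P :: nat where "P = 2 ^ (n + 1)"
  show ?case
  proof (rule ccontr)
    assume "\<not> ?case"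
    then have long: "2 * P < l - i + 2" by (simp add: P_def)
    define j where "j = i + P - 1"
    define k where "k = l + 1 - P"
    have "1 \<le> P" by (simp add: P_def)
    then have jk: "i \<le> j" "j < k" "k \<le> l" "j - i + 2 > P" "l - k + 2 > P"
      using long Suc.prems unfolding j_def k_def by auto
    have "K - (real n + 1) * eps < e i j \<or> K - (real n + 1) * eps < e k l"
      using gain[OF jk(1-3)] Suc.prems by (auto simp: algebra_simps)
    then show False
      using Suc.IH[of i j] Suc.IH[of k l] jk Suc.prems unfolding P_def by auto
  qed
qed

lemma thin_bigons_sample_count:
  fixes \<gamma> \<gamma>' :: "real \<Rightarrow> 'a::metric_space" and s :: "nat \<Rightarrow> real"
  assumes gs: "geodesic_space TYPE('a)"
    and thin: "\<And>(\<gamma>1 :: real \<Rightarrow> 'a) L1 \<gamma>2 L2. bigon eps \<gamma>1 L1 \<gamma>2 L2 \<Longrightarrow> thin_bigon \<delta> \<gamma>1 L1 \<gamma>2 L2"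
    and g: "geodesic \<gamma> a" and g': "geodesic \<gamma>' a'" and origin: "\<gamma> 0 = \<gamma>' 0"
    and "0 \<le> eps" "0 \<le> \<delta>" and few_steps: "K < (real n + 1) * eps"
    and range: "0 \<le> s 0" "s N \<le> a" "s N \<le> a'"
    and separated: "\<And>j k. j < k \<Longrightarrow> k \<le> N \<Longrightarrow> s j + K + \<delta> \<le> s k"
    and gap: "\<And>j. j \<le> N \<Longrightarrow> 2 * \<delta> \<le> dist (\<gamma> (s j)) (\<gamma>' (s j)) \<and> dist (\<gamma> (s j)) (\<gamma>' (s j)) \<le> K"
  shows "N + 2 \<le> 2 ^ (n + 1)"
proof -
  have "0 \<le> K" using gap[of 0] zero_le_dist[of "\<gamma> (s 0)" "\<gamma>' (s 0)"] by linarith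
  then have mono: "s j \<le> s k" if "j \<le> k" "k \<le> N" for j k
    using separated[of j k] that \<open>0 \<le> \<delta>\<close> by (cases "j = k") auto
  have s_range: "0 \<le> s j \<and> s j \<le> a \<and> s j \<le> a'" if "j \<le> N" for j
    using mono[of 0 j] mono[of j N] range that by auto
  define e where "e i l = excess \<gamma> \<gamma>' (s i) (s l)" for i l
  have "N - 0 + 2 \<le> 2 ^ (n + 1)"
  proof (rule excess_growth_length_bound[where e = e and N = N and K = K and eps = eps])
    show "e i l \<le> K" if "i \<le> l" "l \<le> N" for i l
      using excess_le_dist[OF g', of "s i" "s l" \<gamma>] gap[of i] s_range[of i] s_range[of l]
        mono[of i l] that
      unfolding e_def by linarith
    show "e i l + eps < e i j \<or> e i l + eps < e k l"
      if "i \<le> j" "j < k" "k \<le> l" "l \<le> N" for i j k l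
      unfolding e_def
    proof (rule thin_bigons_excess_gain[OF gs thin g g' origin \<open>0 \<le> eps\<close> \<open>0 \<le> \<delta>\<close>])
      show "s j + dist (\<gamma> (s i)) (\<gamma>' (s i)) + \<delta> \<le> s k"
        using separated[of j k] gap[of i] that by linarith
      show "2 * \<delta> \<le> dist (\<gamma> (s k)) (\<gamma>' (s k))" using gap[of k] that by auto
    qed (use s_range[of i] s_range[of l] mono[of i j] mono[of j k] mono[of k l] that in auto)
    have "0 \<le> e 0 N"
      using excess_nonneg[OF g g' origin] s_range[of 0] s_range[of N] unfolding e_def by auto
    then show "K - (real n + 1) * eps < e 0 N" using few_steps by linarith
  qed simp_all
  then show ?thesis by simp
qed

lemma thin_bigons_gap_interval_length:
  fixes \<gamma> \<gamma>' :: "real \<Rightarrow> 'a::metric_space"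
  assumes gs: "geodesic_space TYPE('a)"
    and thin: "\<And>(\<gamma>1 :: real \<Rightarrow> 'a) L1 \<gamma>2 L2. bigon eps \<gamma>1 L1 \<gamma>2 L2 \<Longrightarrow> thin_bigon \<delta> \<gamma>1 L1 \<gamma>2 L2"
    and g: "geodesic \<gamma> a" and g': "geodesic \<gamma>' a'" and origin: "\<gamma> 0 = \<gamma>' 0"
    and "0 \<le> eps" "0 \<le> \<delta>" and few_steps: "K < (real n + 1) * eps"
    and "0 \<le> R" "0 < r" "R + r \<le> a" "R + r \<le> a'"
    and gap: "\<And>t. R < t \<Longrightarrow> t < R + r \<Longrightarrow> 2 * \<delta> \<le> dist (\<gamma> t) (\<gamma>' t) \<and> dist (\<gamma> t) (\<gamma>' t) \<le> K"
  shows "r \<le> (2 ^ (n + 1) - 1) * (K + \<delta>)"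
proof (rule ccontr)
  define N :: nat where "N = 2 ^ (n + 1) - 1"
  have N: "real N = 2 ^ (n + 1) - 1" by (simp add: N_def)
  define D where "D = K + \<delta>"
  assume "\<not> ?thesis"
  then have long: "real N * D < r" by (simp add: N D_def)
  have "dist (\<gamma> (R + r / 2)) (\<gamma>' (R + r / 2)) \<le> K"
    using gap[of "R + r / 2"] \<open>0 < r\<close> by simp
  then have "0 \<le> K" by (rule order_trans[OF zero_le_dist])
  then have "0 \<le> D" using \<open>0 \<le> \<delta>\<close> by (simp add: D_def)
  define c where "c = (r - real N * D) / 2"
  define s where "s j = R + c + real j * D" for j :: nat
  have s_bounds: "R < s j" "s j < R + r" if "j \<le> N" for j
  proof -
    have "0 \<le> real j * D" "real j * D \<le> real N * D"
      using that \<open>0 \<le> D\<close> by (simp_all add: mult_right_mono)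
    with long show "R < s j" "s j < R + r" by (simp_all add: s_def c_def field_simps)
  qed
  have "N + 2 \<le> 2 ^ (n + 1)"
  proof (rule thin_bigons_sample_count[OF gs thin g g' origin \<open>0 \<le> eps\<close> \<open>0 \<le> \<delta>\<close> few_steps])
    show "0 \<le> s 0" "s N \<le> a" "s N \<le> a'" using s_bounds[of 0] s_bounds[of N] assms(9-) by auto
    show "s j + K + \<delta> \<le> s k" if "j < k" for j k
    proof -
      have "real j + 1 \<le> real k" using that by simp
      then have "(real j + 1) * D \<le> real k * D" using \<open>0 \<le> D\<close> by (rule mult_right_mono)
      then show ?thesis by (simp add: s_def D_def algebra_simps)
    qed
    show "2 * \<delta> \<le> dist (\<gamma> (s j)) (\<gamma>' (s j)) \<and> dist (\<gamma> (s j)) (\<gamma>' (s j)) \<le> K" if "j \<le> N" for j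
      using gap s_bounds[OF that] by blast
  qed
  then show False by (simp add: N_def)
qed

theorem theorem1p4:
  fixes K0 K1 q :: nat and \<gamma> \<gamma>' :: "real \<Rightarrow> 'a::metric_space"
    and a a' R r0 :: real
  assumes "geodesic_space TYPE('a)"
    and "1 \<le> K0" and "K0 < K1" and "q \<ge> 3"
    and thin: "\<And>(\<gamma>1 :: real \<Rightarrow> 'a) L1 \<gamma>2 L2. bigon (1 / real q) \<gamma>1 L1 \<gamma>2 L2 \<Longrightarrow>
                 thin_bigon (real K0 / 2) \<gamma>1 L1 \<gamma>2 L2"
    and "geodesic \<gamma> a" and "geodesic \<gamma>' a'" and "\<gamma> 0 = \<gamma>' 0"
    and "R > 0" and "r0 > 0" and "R + r0 \<le> min a a'"
    and "\<And>r. 0 < r \<Longrightarrow> r < r0 \<Longrightarrow>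
           real K0 \<le> dist (\<gamma> (R + r)) (\<gamma>' (R + r)) \<and> dist (\<gamma> (R + r)) (\<gamma>' (R + r)) \<le> real K1"
  shows "r0 \<le> (real q * (real K1 - real K0) + 1) * (2 ^ (q * K1 + 1) - 1) * real q * real K1 + 1"
proof -
  define M :: real where "M = 2 ^ (q * K1 + 1) - 1"
  have "r0 \<le> M * (real K1 + real K0 / 2)"
    unfolding M_def
  proof (rule thin_bigons_gap_interval_length[OF assms(1) thin assms(6-8)])
    show "real K1 < (real (q * K1) + 1) * (1 / real q)"
      using \<open>q \<ge> 3\<close> by (simp add: field_simps)
    show "2 * (real K0 / 2) \<le> dist (\<gamma> t) (\<gamma>' t) \<and> dist (\<gamma> t) (\<gamma>' t) \<le> real K1"
      if "R < t" "t < R + r0" for t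
      using assms(12)[of "t - R"] that by simp
  qed (use assms(9-11) in auto)
  also have "\<dots> \<le> M * ((real q * (real K1 - real K0) + 1) * real q * real K1)"
  proof (rule mult_left_mono)
    have "real K1 + real K0 / 2 \<le> 2 * real K1"
      using \<open>K0 < K1\<close> by simp
    also have "\<dots> \<le> 1 * real q * real K1"
      using \<open>q \<ge> 3\<close> by (simp add: mult_right_mono)
    also have "\<dots> \<le> (real q * (real K1 - real K0) + 1) * real q * real K1"
      using \<open>K0 < K1\<close> by (intro mult_right_mono) auto
    finally show "real K1 + real K0 / 2 \<le> \<dots>" .
    have "(1::real) \<le> 2 ^ (q * K1 + 1)" by (rule one_le_power) simp
    then show "0 \<le> M" by (simp add: M_def)
  qed
  finally show ?thesis by (simp add: M_def mult_ac)
qed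

end
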